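(* Let $\mathscr{H}$ be a complex Hilbert space and let $N(\cdot)$ be a norm on $\mathbb{B}(\mathscr{H})$ which is an algebra norm ($N(XY)\leq N(X)N(Y)$ for all $X,Y$) and self-adjoint ($N(X^* )=N(X)$ for all $X$). Then for every $T\in\mathbb{B}(\mathscr{H})$, $$\frac1{16}N(T^*T+TT^* )+\frac12 w_N(T)\,|N(\Re T)-N(\Im T)|\leq w_N^2(T).$$
   Context: For $T\in\mathbb{B}(\mathscr{H})$: $\Re(T)=\frac12(T+T^* )$, $\Im(T)=\frac1{2i}(T-T^* )$, and $w_N(T)=\sup_{\theta\in\mathbb{R}}N(\Re(e^{i\theta}T))$. *)

theory Defs
  imports "HOL-Analysis.Analysis"
begin

text \<open>The inner product is conjugate-linear in the first and linear in the second argument;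
  the norm is the one induced by the inner product and the real scalar multiplication
  is the restriction of the complex one. A complex Hilbert space is a type of class
  complex_inner that is also complete_space.\<close>

class complex_inner = real_normed_vector +
  fixes scaleC :: "complex \<Rightarrow> 'a \<Rightarrow> 'a"
    and cinner :: "'a \<Rightarrow> 'a \<Rightarrow> complex"
  assumes scaleC_add_right: "scaleC a (x + y) = scaleC a x + scaleC a y"
    and scaleC_add_left: "scaleC (a + b) x = scaleC a x + scaleC b x"
    and scaleC_scaleC: "scaleC a (scaleC b x) = scaleC (a * b) x"
    and scaleC_one: "scaleC 1 x = x"
    and scaleR_scaleC: "scaleR r x = scaleC (complex_of_real r) x"
    and cinner_conj: "cinner x y = cnj (cinner y x)"
    and cinner_add_right: "cinner x (y + z) = cinner x y + cinner x z"
    and cinner_scaleC_right: "cinner x (scaleC a y) = a * cinner x y"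
    and cinner_self_real: "Im (cinner x x) = 0"
    and cinner_self_nonneg: "0 \<le> Re (cinner x x)"
    and cinner_self_eq_zero: "cinner x x = 0 \<longleftrightarrow> x = 0"
    and norm_cinner: "norm x = sqrt (Re (cinner x x))"

definition bounded_ops :: "('a::complex_inner \<Rightarrow> 'a) set" where
  "bounded_ops = {T. (\<forall>x y. T (x + y) = T x + T y) \<and>
                     (\<forall>c x. T (scaleC c x) = scaleC c (T x)) \<and>
                     (\<exists>K. \<forall>x. norm (T x) \<le> K * norm x)}"

definition adj :: "('a::complex_inner \<Rightarrow> 'a) \<Rightarrow> ('a \<Rightarrow> 'a)" where
  "adj T = (SOME S. \<forall>x y. cinner (T x) y = cinner x (S y))"

definition op_scale :: "complex \<Rightarrow> ('a::complex_inner \<Rightarrow> 'a) \<Rightarrow> ('a \<Rightarrow> 'a)" where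
  "op_scale c T = (\<lambda>x. scaleC c (T x))"

definition op_add :: "('a::complex_inner \<Rightarrow> 'a) \<Rightarrow> ('a \<Rightarrow> 'a) \<Rightarrow> ('a \<Rightarrow> 'a)" where
  "op_add S T = (\<lambda>x. S x + T x)"

definition ReOp :: "('a::complex_inner \<Rightarrow> 'a) \<Rightarrow> ('a \<Rightarrow> 'a)" where
  "ReOp T = (\<lambda>x. scaleC (1/2) (T x + adj T x))"

definition ImOp :: "('a::complex_inner \<Rightarrow> 'a) \<Rightarrow> ('a \<Rightarrow> 'a)" where
  "ImOp T = (\<lambda>x. scaleC (1 / (2 * \<i>)) (T x - adj T x))"

definition is_norm_on_BH :: "(('a::complex_inner \<Rightarrow> 'a) \<Rightarrow> real) \<Rightarrow> bool" where
  "is_norm_on_BH N \<longleftrightarrow>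
     (\<forall>X\<in>bounded_ops. 0 \<le> N X) \<and>
     (\<forall>X\<in>bounded_ops. N X = 0 \<longleftrightarrow> X = (\<lambda>x. 0)) \<and>
     (\<forall>c. \<forall>X\<in>bounded_ops. N (op_scale c X) = norm c * N X) \<and>
     (\<forall>X\<in>bounded_ops. \<forall>Y\<in>bounded_ops. N (op_add X Y) \<le> N X + N Y)"

definition wN :: "(('a::complex_inner \<Rightarrow> 'a) \<Rightarrow> real) \<Rightarrow> ('a \<Rightarrow> 'a) \<Rightarrow> real" where
  "wN N T = (SUP \<theta>\<in>(UNIV::real set). N (ReOp (op_scale (exp (\<i> * of_real \<theta>)) T)))"

end

theory Submission
  imports Defs
begin

(* With A = Re T and B = Im T one has T^* T + T T^* = 2 (A^2 + B^2), so the triangle inequality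
   and submultiplicativity bound N of the left-hand side by 2 (N(A)^2 + N(B)^2). Since A = Re T
   and B = Re (e^{-i pi/2} T), both N(A) and N(B) are at most w_N(T), and the claim reduces to the
   elementary inequality (a^2 + b^2)/8 + w |a - b|/2 <= w^2 for 0 <= a, b <= w.
   The adjoint is defined by Hilbert choice, so everything about it rests on the Riesz
   representation theorem, proved via the element of minimal norm in the closed convex
   set g^{-1}(1). *)

section \<open>Complex inner product spaces\<close>

lemma cinner_add_left: "cinner (x + y) z = cinner x z + cinner (y::'a::complex_inner) z"
  by (metis cinner_conj cinner_add_right complex_cnj_add)

lemma cinner_scaleC_left: "cinner (scaleC a x) (y::'a::complex_inner) = cnj a * cinner x y"
  by (metis cinner_conj cinner_scaleC_right complex_cnj_mult)

lemma cinner_zero_right [simp]: "cinner (x::'a::complex_inner) 0 = 0"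
  by (metis add.right_neutral add_cancel_right_right cinner_add_right)

lemma cinner_zero_left [simp]: "cinner 0 (x::'a::complex_inner) = 0"
  by (metis cinner_conj cinner_zero_right complex_cnj_zero)

lemma scaleC_minus1_left: "scaleC (-1) (x::'a::complex_inner) = - x"
  by (metis of_real_1 of_real_minus scaleR_minus1_left scaleR_scaleC)

lemma cinner_minus_right [simp]: "cinner x (- y) = - cinner (x::'a::complex_inner) y"
  by (metis cinner_scaleC_right mult_minus1 scaleC_minus1_left)

lemma cinner_minus_left [simp]: "cinner (- x) y = - cinner (x::'a::complex_inner) y"
  by (metis cinner_conj cinner_minus_right complex_cnj_minus)

lemma cinner_diff_right [simp]: "cinner x (y - z) = cinner x y - cinner (x::'a::complex_inner) z"
  by (metis cinner_add_right cinner_minus_right diff_conv_add_uminus)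

lemma cinner_diff_left [simp]: "cinner (y - z) x = cinner y x - cinner z (x::'a::complex_inner)"
  by (metis cinner_add_left cinner_minus_left diff_conv_add_uminus)

lemmas cinner_simps [simp] =
  cinner_add_left cinner_add_right cinner_scaleC_left cinner_scaleC_right

lemma cinner_self: "cinner x x = complex_of_real ((norm (x::'a::complex_inner))\<^sup>2)"
  by (simp add: norm_cinner cinner_self_nonneg complex_eq_iff cinner_self_real)

lemma power2_norm_eq_cinner: "(norm x)\<^sup>2 = Re (cinner x (x::'a::complex_inner))"
  by (simp add: cinner_self)

lemma Re_cinner_commute: "Re (cinner y x) = Re (cinner x (y::'a::complex_inner))"
  by (subst cinner_conj) simp

text \<open>Identities between vectors are proved below by pairing both sides with an arbitrary z
  (rule cinner_ext): the simplifier then only has to check an identity of complex numbers.\<close>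

lemma cinner_ext: "(\<And>z. cinner z x = cinner z y) \<Longrightarrow> x = (y::'a::complex_inner)"
  by (metis cinner_diff_right cinner_self_eq_zero right_minus_eq)

lemma complex_mult_cnj_eq_power2_cmod:
  "c * cnj c = (complex_of_real (cmod c))\<^sup>2" "cnj c * c = (complex_of_real (cmod c))\<^sup>2"
  by (metis complex_norm_square of_real_power) (metis complex_norm_square mult.commute of_real_power)

lemma norm_scaleC: "norm (scaleC c (x::'a::complex_inner)) = cmod c * norm x"
proof -
  have "(norm (scaleC c x))\<^sup>2 = (cmod c)\<^sup>2 * (norm x)\<^sup>2"
    by (simp add: power2_norm_eq_cinner mult.assoc[symmetric] complex_mult_cnj_eq_power2_cmod
        flip: of_real_power)
  then show ?thesis
    by (simp flip: power_mult_distrib)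
qed

lemma power2_norm_add:
  "(norm (x + y))\<^sup>2 = (norm x)\<^sup>2 + (norm y)\<^sup>2 + 2 * Re (cinner x (y::'a::complex_inner))"
  by (simp add: power2_norm_eq_cinner Re_cinner_commute[of y x])

lemma parallelogram_law:
  "(norm (x + y))\<^sup>2 + (norm (x - y))\<^sup>2 = 2 * (norm x)\<^sup>2 + 2 * (norm (y::'a::complex_inner))\<^sup>2"
  using power2_norm_add[of x y] power2_norm_add[of x "- y"] by simp

lemma cauchy_schwarz: "cmod (cinner x y) \<le> norm x * norm (y::'a::complex_inner)"
proof (cases "x = 0")
  case True
  then show ?thesis by simp
next
  case False
  define a where "a = (norm x)\<^sup>2"
  define c where "c = cinner x y"
  have a: "a > 0" using False by (simp add: a_def)
  define v where "v = y - scaleC (c / a) x"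
  have "cinner v v = cinner y y - (c / a) * cinner y x - cnj (c / a) * cinner x y
      + cnj (c / a) * (c / a) * cinner x x"
    by (simp add: v_def algebra_simps)
  also have "\<dots> = complex_of_real ((norm y)\<^sup>2 - (cmod c)\<^sup>2 / a)"
    using a by (simp add: cinner_self c_def[symmetric] a_def[symmetric] cinner_conj[of y x]
        complex_mult_cnj_eq_power2_cmod field_simps)
  finally have "0 \<le> (norm y)\<^sup>2 - (cmod c)\<^sup>2 / a"
    by (metis Re_complex_of_real power2_norm_eq_cinner zero_le_power2)
  then have "(cmod c)\<^sup>2 \<le> (norm x * norm y)\<^sup>2"
    using a by (simp add: a_def field_simps)
  then show ?thesis
    unfolding c_def by (meson mult_nonneg_nonneg norm_ge_zero power2_le_imp_le)
qed

section \<open>The Riesz representation theorem\<close>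

lemma Cauchy_if_power2_dist_le:
  fixes xs :: "nat \<Rightarrow> 'a::real_normed_vector"
  assumes a: "a \<longlonglongrightarrow> 0" and dist: "\<And>m n. (norm (xs m - xs n))\<^sup>2 \<le> 2 * a m + 2 * a n"
  shows "Cauchy xs"
proof (rule metric_CauchyI)
  fix r :: real
  assume r: "r > 0"
  then obtain M where M: "\<And>n. n \<ge> M \<Longrightarrow> norm (a n) < r\<^sup>2 / 4"
    using LIMSEQ_D[OF a, of "r\<^sup>2 / 4"] by auto
  have "dist (xs m) (xs n) < r" if "M \<le> m" "M \<le> n" for m n
  proof -
    have "(norm (xs m - xs n))\<^sup>2 < r\<^sup>2"
      using dist[of m n] M[OF that(1)] M[OF that(2)] by auto
    then show ?thesis
      using r by (simp add: dist_norm power2_less_imp_less)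
  qed
  then show "\<exists>M. \<forall>m\<ge>M. \<forall>n\<ge>M. dist (xs m) (xs n) < r" by blast
qed

lemma minimizing_sequence_exists:
  fixes C :: "'a::real_normed_vector set"
  assumes "C \<noteq> {}"
  obtains xs where "\<And>n. xs n \<in> C" "(\<lambda>n. norm (xs n)) \<longlonglongrightarrow> Inf (norm ` C)"
proof -
  let ?d = "Inf (norm ` C)"
  have bdd: "bdd_below (norm ` C)" by (rule bdd_belowI[of _ 0]) auto
  have "\<exists>y\<in>C. norm y < ?d + inverse (real (Suc n))" for n
    using cInf_lessD[of "norm ` C" "?d + inverse (real (Suc n))"] assms by auto
  then obtain xs where xs: "\<And>n. xs n \<in> C" "\<And>n. norm (xs n) < ?d + inverse (real (Suc n))"
    by metis
  have "(\<lambda>n. norm (xs n)) \<longlonglongrightarrow> ?d"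
  proof (rule tendsto_sandwich[OF _ _ tendsto_const])
    show "\<forall>\<^sub>F n in sequentially. ?d \<le> norm (xs n)"
      using xs(1) bdd by (simp add: cInf_lower)
    show "\<forall>\<^sub>F n in sequentially. norm (xs n) \<le> ?d + inverse (real (Suc n))"
      using xs(2) by (simp add: less_imp_le)
    show "(\<lambda>n. ?d + inverse (real (Suc n))) \<longlonglongrightarrow> ?d"
      using tendsto_add[OF tendsto_const LIMSEQ_inverse_real_of_nat] by simp
  qed
  then show ?thesis using xs(1) that by blast
qed

lemma min_norm_element_exists:
  fixes C :: "'a::{complex_inner,complete_space} set"
  assumes "closed C" "convex C" "C \<noteq> {}"
  obtains x0 where "x0 \<in> C" "\<And>y. y \<in> C \<Longrightarrow> norm x0 \<le> norm y"
proof -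
  define d where "d = Inf (norm ` C)"
  have d_le: "d \<le> norm y" if "y \<in> C" for y
    unfolding d_def using that by (intro cInf_lower bdd_belowI[of _ 0]) auto
  have d0: "0 \<le> d"
    unfolding d_def using \<open>C \<noteq> {}\<close> by (intro cInf_greatest) auto
  obtain xs where xs: "\<And>n. xs n \<in> C" and lim_norm: "(\<lambda>n. norm (xs n)) \<longlonglongrightarrow> d"
    using minimizing_sequence_exists[OF \<open>C \<noteq> {}\<close>] unfolding d_def by blast
  define a where "a n = (norm (xs n))\<^sup>2 - d\<^sup>2" for n
  have "a \<longlonglongrightarrow> d\<^sup>2 - d\<^sup>2"
    unfolding a_def by (intro tendsto_diff tendsto_power lim_norm tendsto_const)
  then have a: "a \<longlonglongrightarrow> 0" by simp
  have "(norm (xs m - xs n))\<^sup>2 \<le> 2 * a m + 2 * a n" for m n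
  proof -
    have "(1/2) *\<^sub>R xs m + (1/2) *\<^sub>R xs n \<in> C"
      using \<open>convex C\<close> xs by (intro convexD) auto
    then have "d \<le> norm ((1/2) *\<^sub>R (xs m + xs n))"
      by (intro d_le) (simp add: scaleR_right_distrib)
    then have "d \<le> norm (xs m + xs n) / 2" by simp
    then have "(2 * d)\<^sup>2 \<le> (norm (xs m + xs n))\<^sup>2"
      using d0 by (intro power_mono) auto
    then show ?thesis
      using parallelogram_law[of "xs m" "xs n"] by (simp add: a_def power_mult_distrib)
  qed
  then have "Cauchy xs" by (rule Cauchy_if_power2_dist_le[OF a])
  then obtain x0 where lim: "xs \<longlonglongrightarrow> x0"
    using Cauchy_convergent convergent_def by blast
  have "x0 \<in> C"
    using closed_sequentially[OF \<open>closed C\<close> xs lim] .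
  moreover have "norm x0 = d"
    using tendsto_norm[OF lim] lim_norm by (rule LIMSEQ_unique)
  ultimately show ?thesis using d_le that by auto
qed

lemma cinner_eq_zero_if_norm_minimal:
  fixes x0 m :: "'a::complex_inner"
  assumes min: "\<And>t. norm x0 \<le> norm (x0 + scaleC t m)"
  shows "cinner x0 m = 0"
proof (rule ccontr)
  \<comment> \<open>Moving from x0 along m by t = -s cnj c, with s > 0 small, changes the squared norm by
     s (cmod c)^2 (s (norm m)^2 - 2) < 0.\<close>
  define c where "c = cinner x0 m"
  assume "cinner x0 m \<noteq> 0"
  then have c: "(cmod c)\<^sup>2 > 0" by (simp add: c_def)
  define s where "s = inverse ((norm m)\<^sup>2 + 1)"
  have "(norm m)\<^sup>2 + 1 > 0" by (simp add: add_nonneg_pos)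
  then have s: "s > 0" "s * (norm m)\<^sup>2 < 1"
    by (simp_all add: s_def field_simps)
  define t where "t = - complex_of_real s * cnj c"
  have "(norm (x0 + scaleC t m))\<^sup>2 = (norm x0)\<^sup>2 + (cmod t * norm m)\<^sup>2 + 2 * Re (t * c)"
    by (simp add: power2_norm_add norm_scaleC c_def)
  also have "\<dots> = (norm x0)\<^sup>2 + (cmod c)\<^sup>2 * s * (s * (norm m)\<^sup>2 - 2)"
  proof -
    have "t * c = - complex_of_real (s * (cmod c)\<^sup>2)"
      by (simp add: t_def complex_mult_cnj_eq_power2_cmod)
    moreover have "cmod t = s * cmod c"
      using s by (simp add: t_def norm_mult)
    ultimately show ?thesis by (simp add: algebra_simps power2_eq_square)
  qed
  also have "\<dots> < (norm x0)\<^sup>2"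
    using c s by (simp add: mult_pos_neg)
  finally have "norm (x0 + scaleC t m) < norm x0"
    by (simp add: power2_less_imp_less)
  then show False using min[of t] by linarith
qed

lemma eq_cinner_if_kernel_orthogonal:
  fixes g :: "'a::complex_inner \<Rightarrow> complex"
  assumes add: "\<And>x y. g (x + y) = g x + g y"
    and scale: "\<And>c x. g (scaleC c x) = c * g x"
    and x0: "g x0 = 1" and orth: "\<And>m. g m = 0 \<Longrightarrow> cinner x0 m = 0"
  shows "g x = cinner (scaleC (cnj (1 / cinner x0 x0)) x0) x"
proof -
  have "g 0 = 0"
    using add[of 0 0] by simp
  then have "x0 \<noteq> 0"
    using x0 by auto
  then have "cinner x0 x0 \<noteq> 0"
    by (simp add: cinner_self_eq_zero)
  moreover have "g (x - y) = g x - g y" for y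
    using add[of x "- y"] scale[of "- 1" y] by (simp add: scaleC_minus1_left)
  then have "g (x - scaleC (g x) x0) = 0"
    by (simp add: scale x0)
  then have "cinner x0 x = g x * cinner x0 x0"
    using orth[of "x - scaleC (g x) x0"] by simp
  ultimately show ?thesis
    by (metis cinner_scaleC_left complex_cnj_cnj nonzero_eq_divide_eq times_divide_eq_left mult_1)
qed

theorem riesz_representation:
  fixes g :: "'a::{complex_inner,complete_space} \<Rightarrow> complex"
  assumes add: "\<And>x y. g (x + y) = g x + g y"
    and scale: "\<And>c x. g (scaleC c x) = c * g x"
    and bound: "\<And>x. cmod (g x) \<le> K * norm x"
  shows "\<exists>z. \<forall>x. g x = cinner z x"
proof (cases "\<forall>x. g x = 0")
  case True
  then show ?thesis by (intro exI[of _ 0]) simp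
next
  case False
  then obtain u where u: "g u \<noteq> 0" by blast
  have "bounded_linear g"
    by (rule bounded_linear_intro[where K = K])
      (simp_all add: add scale scaleR_scaleC bound mult.commute scaleR_conv_of_real)
  define C where "C = g -` {1}"
  have "closed C"
    unfolding C_def by (intro closed_vimage linear_continuous_on \<open>bounded_linear g\<close>) simp
  moreover have "convex C"
    unfolding C_def using \<open>bounded_linear g\<close>
    by (intro convex_linear_vimage bounded_linear.linear) simp_all
  moreover have "scaleC (1 / g u) u \<in> C"
    using u by (simp add: C_def scale)
  then have "C \<noteq> {}" by blast
  ultimately obtain x0 where "x0 \<in> C" and x0_min: "\<And>y. y \<in> C \<Longrightarrow> norm x0 \<le> norm y"
    by (metis min_norm_element_exists)
  then have x0: "g x0 = 1" by (simp add: C_def)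
  have "cinner x0 m = 0" if "g m = 0" for m
  proof (rule cinner_eq_zero_if_norm_minimal)
    fix t
    show "norm x0 \<le> norm (x0 + scaleC t m)"
      using that by (intro x0_min) (simp add: C_def add scale x0)
  qed
  then show ?thesis
    using eq_cinner_if_kernel_orthogonal[OF add scale x0] by blast
qed

section \<open>Bounded operators and the adjoint\<close>

lemma bounded_opsD:
  assumes "X \<in> bounded_ops"
  shows bounded_ops_add: "X (u + v) = X u + X v"
    and bounded_ops_scaleC: "X (scaleC c u) = scaleC c (X u)"
  using assms by (simp_all add: bounded_ops_def)

lemma bounded_ops_diff: "X \<in> bounded_ops \<Longrightarrow> X (u - v) = X u - X (v::'a::complex_inner)"
  by (metis bounded_ops_add bounded_ops_scaleC diff_conv_add_uminus scaleC_minus1_left)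

lemma bounded_ops_bound:
  assumes "X \<in> bounded_ops"
  obtains K where "K \<ge> 0" "\<And>x. norm (X x) \<le> K * norm x"
proof -
  obtain K where K: "\<And>x. norm (X x) \<le> K * norm x"
    using assms by (auto simp: bounded_ops_def)
  have "norm (X x) \<le> max K 0 * norm x" for x
    by (metis K max.cobounded1 mult_right_mono norm_ge_zero order_trans)
  then show ?thesis using that[of "max K 0"] by simp
qed

lemma bounded_opsI:
  assumes "\<And>u v. X (u + v) = X u + X v" "\<And>c u. X (scaleC c u) = scaleC c (X u)"
    and "\<And>x. norm (X x) \<le> K * norm x"
  shows "X \<in> bounded_ops"
  using assms by (auto simp: bounded_ops_def)

lemma op_add_bounded_ops:
  assumes X: "X \<in> bounded_ops" and Y: "Y \<in> bounded_ops"
  shows "op_add X Y \<in> bounded_ops"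
proof -
  obtain K L where K: "\<And>x. norm (X x) \<le> K * norm x" and L: "\<And>x. norm (Y x) \<le> L * norm x"
    using bounded_ops_bound[OF X] bounded_ops_bound[OF Y] by metis
  show ?thesis
  proof (rule bounded_opsI[where K = "K + L"])
    fix x
    show "norm (op_add X Y x) \<le> (K + L) * norm x"
      unfolding op_add_def using K[of x] L[of x] norm_triangle_ineq[of "X x" "Y x"]
      by (simp add: distrib_right)
  qed (simp_all add: op_add_def bounded_ops_add[OF X] bounded_ops_add[OF Y]
      bounded_ops_scaleC[OF X] bounded_ops_scaleC[OF Y] scaleC_add_right)
qed

lemma op_scale_bounded_ops:
  assumes X: "X \<in> bounded_ops"
  shows "op_scale c X \<in> bounded_ops"
proof -
  obtain K where K: "\<And>x. norm (X x) \<le> K * norm x"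
    using bounded_ops_bound[OF X] by metis
  show ?thesis
  proof (rule bounded_opsI[where K = "cmod c * K"])
    fix x
    show "norm (op_scale c X x) \<le> (cmod c * K) * norm x"
      unfolding op_scale_def using K[of x] by (simp add: norm_scaleC mult.assoc mult_left_mono)
  qed (simp_all add: op_scale_def bounded_ops_add[OF X] bounded_ops_scaleC[OF X]
      scaleC_add_right scaleC_scaleC mult.commute)
qed

lemma comp_bounded_ops:
  assumes X: "X \<in> bounded_ops" and Y: "Y \<in> bounded_ops"
  shows "X \<circ> Y \<in> bounded_ops"
proof -
  obtain K where K: "K \<ge> 0" "\<And>x. norm (X x) \<le> K * norm x"
    using bounded_ops_bound[OF X] by metis
  obtain L where L: "\<And>x. norm (Y x) \<le> L * norm x"
    using bounded_ops_bound[OF Y] by metis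
  show ?thesis
  proof (rule bounded_opsI[where K = "K * L"])
    fix x
    have "norm (X (Y x)) \<le> K * (L * norm x)"
      using K L[of x] by (meson mult_left_mono order_trans)
    then show "norm ((X \<circ> Y) x) \<le> (K * L) * norm x" by (simp add: mult.assoc)
  qed (simp_all add: bounded_ops_add[OF X] bounded_ops_add[OF Y]
      bounded_ops_scaleC[OF X] bounded_ops_scaleC[OF Y])
qed

lemma adjoint_exists:
  fixes X :: "'a::{complex_inner,complete_space} \<Rightarrow> 'a"
  assumes X: "X \<in> bounded_ops"
  shows "\<exists>S. \<forall>x y. cinner (X x) y = cinner x (S y)"
proof -
  obtain K where K: "K \<ge> 0" "\<And>x. norm (X x) \<le> K * norm x"
    using bounded_ops_bound[OF X] by metis
  have "\<exists>z. \<forall>x. cinner y (X x) = cinner z x" for y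
  proof (rule riesz_representation[where K = "norm y * K"])
    fix x
    have "cmod (cinner y (X x)) \<le> norm y * norm (X x)" by (rule cauchy_schwarz)
    also have "\<dots> \<le> norm y * (K * norm x)" using K by (simp add: mult_left_mono)
    finally show "cmod (cinner y (X x)) \<le> norm y * K * norm x" by (simp add: mult.assoc)
  qed (simp_all add: bounded_ops_add[OF X] bounded_ops_scaleC[OF X])
  then obtain S where "\<And>y x. cinner y (X x) = cinner (S y) x" by metis
  then have "cinner (X x) y = cinner x (S y)" for x y
    by (metis cinner_conj)
  then show ?thesis by blast
qed

lemma adj_cinner:
  fixes X :: "'a::{complex_inner,complete_space} \<Rightarrow> 'a"
  assumes "X \<in> bounded_ops"
  shows "cinner (X x) y = cinner x (adj X y)"
  using someI_ex[OF adjoint_exists[OF assms]] unfolding adj_def by blast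

lemma adj_unique:
  fixes X :: "'a::{complex_inner,complete_space} \<Rightarrow> 'a"
  assumes X: "X \<in> bounded_ops" and S: "\<And>x y. cinner (X x) y = cinner x (S y)"
  shows "adj X = S"
proof
  fix y
  show "adj X y = S y"
    by (rule cinner_ext) (metis S adj_cinner[OF X])
qed

lemma adj_bounded_ops:
  fixes X :: "'a::{complex_inner,complete_space} \<Rightarrow> 'a"
  assumes X: "X \<in> bounded_ops"
  shows "adj X \<in> bounded_ops"
proof -
  obtain K where K: "K \<ge> 0" "\<And>x. norm (X x) \<le> K * norm x"
    using bounded_ops_bound[OF X] by metis
  show ?thesis
  proof (rule bounded_opsI[where K = K])
    fix y
    let ?s = "adj X y"
    have "(norm ?s)\<^sup>2 = Re (cinner (X ?s) y)"
      by (simp add: power2_norm_eq_cinner adj_cinner[OF X])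
    also have "\<dots> \<le> norm (X ?s) * norm y"
      using complex_Re_le_cmod cauchy_schwarz order_trans by blast
    also have "\<dots> \<le> K * norm ?s * norm y"
      using K by (simp add: mult_right_mono)
    finally have "norm ?s * norm ?s \<le> norm ?s * (K * norm y)"
      by (simp add: power2_eq_square algebra_simps)
    then show "norm ?s \<le> K * norm y"
      using K by (cases "norm ?s = 0") (simp_all add: mult_le_cancel_left_pos)
  qed (rule cinner_ext, simp flip: adj_cinner[OF X])+
qed

lemma adj_op_scale:
  fixes X :: "'a::{complex_inner,complete_space} \<Rightarrow> 'a"
  assumes X: "X \<in> bounded_ops"
  shows "adj (op_scale c X) = op_scale (cnj c) (adj X)"
  by (rule adj_unique[OF op_scale_bounded_ops[OF X]]) (simp add: op_scale_def adj_cinner[OF X])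

section \<open>Cartesian decomposition and the generalized numerical radius\<close>

lemma is_norm_on_BHD:
  assumes "is_norm_on_BH N" and "X \<in> bounded_ops"
  shows norm_on_BH_nonneg: "0 \<le> N X"
    and norm_on_BH_scale: "N (op_scale c X) = cmod c * N X"
    and norm_on_BH_triangle: "Y \<in> bounded_ops \<Longrightarrow> N (op_add X Y) \<le> N X + N Y"
  using assms by (auto simp: is_norm_on_BH_def)

lemma ReOp_eq: "ReOp T = op_scale (1/2) (op_add T (adj T))"
  by (simp add: ReOp_def op_scale_def op_add_def)

lemma ReOp_bounded_ops:
  fixes T :: "'a::{complex_inner,complete_space} \<Rightarrow> 'a"
  shows "T \<in> bounded_ops \<Longrightarrow> ReOp T \<in> bounded_ops"
  unfolding ReOp_eq by (intro op_scale_bounded_ops op_add_bounded_ops adj_bounded_ops)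

lemma ImOp_eq_ReOp_rotation:
  fixes T :: "'a::{complex_inner,complete_space} \<Rightarrow> 'a"
  assumes T: "T \<in> bounded_ops"
  shows "ImOp T = ReOp (op_scale (- \<i>) T)"
proof
  fix x
  show "ImOp T x = ReOp (op_scale (- \<i>) T) x"
    unfolding ReOp_def ImOp_def adj_op_scale[OF T]
    by (rule cinner_ext) (simp add: op_scale_def field_simps)
qed

lemma ImOp_bounded_ops:
  fixes T :: "'a::{complex_inner,complete_space} \<Rightarrow> 'a"
  shows "T \<in> bounded_ops \<Longrightarrow> ImOp T \<in> bounded_ops"
  by (simp add: ImOp_eq_ReOp_rotation ReOp_bounded_ops op_scale_bounded_ops)

lemma adj_comp_add_comp_adj_eq:
  fixes T :: "'a::{complex_inner,complete_space} \<Rightarrow> 'a"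
  assumes T: "T \<in> bounded_ops"
  shows "op_add (adj T \<circ> T) (T \<circ> adj T)
    = op_scale 2 (op_add (ReOp T \<circ> ReOp T) (ImOp T \<circ> ImOp T))"
proof
  fix x
  note S = adj_bounded_ops[OF T]
  show "op_add (adj T \<circ> T) (T \<circ> adj T) x
      = op_scale 2 (op_add (ReOp T \<circ> ReOp T) (ImOp T \<circ> ImOp T)) x"
    by (rule cinner_ext)
      (simp add: op_scale_def op_add_def ReOp_def ImOp_def field_simps
        bounded_ops_add[OF T] bounded_ops_add[OF S] bounded_ops_scaleC[OF T]
        bounded_ops_scaleC[OF S] bounded_ops_diff[OF T] bounded_ops_diff[OF S])
qed

lemma N_ReOp_le:
  fixes N :: "('a::{complex_inner,complete_space} \<Rightarrow> 'a) \<Rightarrow> real"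
  assumes N: "is_norm_on_BH N" and selfadjoint: "\<forall>X\<in>bounded_ops. N (adj X) = N X"
    and X: "X \<in> bounded_ops"
  shows "N (ReOp X) \<le> N X"
proof -
  note S = adj_bounded_ops[OF X]
  have "N (ReOp X) = 1/2 * N (op_add X (adj X))"
    using norm_on_BH_scale[OF N op_add_bounded_ops[OF X S]] by (simp add: ReOp_eq)
  also have "\<dots> \<le> 1/2 * (N X + N (adj X))"
    using norm_on_BH_triangle[OF N X S] by simp
  also have "\<dots> = N X"
    using selfadjoint X by simp
  finally show ?thesis .
qed

lemma N_ReOp_rotation_le_wN:
  fixes N :: "('a::{complex_inner,complete_space} \<Rightarrow> 'a) \<Rightarrow> real"
  assumes N: "is_norm_on_BH N" and selfadjoint: "\<forall>X\<in>bounded_ops. N (adj X) = N X"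
    and T: "T \<in> bounded_ops"
  shows "N (ReOp (op_scale (exp (\<i> * of_real \<theta>)) T)) \<le> wN N T"
proof -
  have "N (ReOp (op_scale (exp (\<i> * of_real \<phi>)) T)) \<le> N T" for \<phi>
  proof -
    have "N (ReOp (op_scale (exp (\<i> * of_real \<phi>)) T)) \<le> N (op_scale (exp (\<i> * of_real \<phi>)) T)"
      by (rule N_ReOp_le[OF N selfadjoint op_scale_bounded_ops[OF T]])
    also have "\<dots> = N T"
      using norm_on_BH_scale[OF N T] by simp
    finally show ?thesis .
  qed
  then have "bdd_above (range (\<lambda>\<phi>. N (ReOp (op_scale (exp (\<i> * of_real \<phi>)) T))))"
    by (intro bdd_aboveI) auto
  then show ?thesis
    unfolding wN_def by (rule cSUP_upper[OF UNIV_I])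
qed

lemma N_ReOp_le_wN:
  fixes N :: "('a::{complex_inner,complete_space} \<Rightarrow> 'a) \<Rightarrow> real"
  assumes "is_norm_on_BH N" and "\<forall>X\<in>bounded_ops. N (adj X) = N X" and "T \<in> bounded_ops"
  shows "N (ReOp T) \<le> wN N T"
  using N_ReOp_rotation_le_wN[OF assms, of 0] by (simp add: op_scale_def scaleC_one)

lemma N_ImOp_le_wN:
  fixes N :: "('a::{complex_inner,complete_space} \<Rightarrow> 'a) \<Rightarrow> real"
  assumes "is_norm_on_BH N" and "\<forall>X\<in>bounded_ops. N (adj X) = N X"
    and T: "T \<in> bounded_ops"
  shows "N (ImOp T) \<le> wN N T"
proof -
  have "cis (- pi / 2) = - \<i>"
    by (simp add: complex_eq_iff)
  then have "exp (\<i> * of_real (- pi / 2)) = - \<i>"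
    by (simp add: cis_conv_exp)
  then show ?thesis
    using N_ReOp_rotation_le_wN[OF assms, of "- pi / 2"] by (simp add: ImOp_eq_ReOp_rotation[OF T])
qed

lemma N_adj_comp_add_comp_adj_le:
  fixes N :: "('a::{complex_inner,complete_space} \<Rightarrow> 'a) \<Rightarrow> real"
  assumes N: "is_norm_on_BH N"
    and algebra_norm: "\<forall>X\<in>bounded_ops. \<forall>Y\<in>bounded_ops. N (X \<circ> Y) \<le> N X * N Y"
    and T: "T \<in> bounded_ops"
  shows "N (op_add (adj T \<circ> T) (T \<circ> adj T)) \<le> 2 * ((N (ReOp T))\<^sup>2 + (N (ImOp T))\<^sup>2)"
proof -
  note A = ReOp_bounded_ops[OF T] and B = ImOp_bounded_ops[OF T]
  note AA = comp_bounded_ops[OF A A] and BB = comp_bounded_ops[OF B B]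
  have "N (op_add (adj T \<circ> T) (T \<circ> adj T)) = 2 * N (op_add (ReOp T \<circ> ReOp T) (ImOp T \<circ> ImOp T))"
    using norm_on_BH_scale[OF N op_add_bounded_ops[OF AA BB]]
    by (simp add: adj_comp_add_comp_adj_eq[OF T])
  also have "\<dots> \<le> 2 * (N (ReOp T \<circ> ReOp T) + N (ImOp T \<circ> ImOp T))"
    using norm_on_BH_triangle[OF N AA BB] by simp
  also have "\<dots> \<le> 2 * ((N (ReOp T))\<^sup>2 + (N (ImOp T))\<^sup>2)"
    using algebra_norm A B by (simp add: power2_eq_square add_mono)
  finally show ?thesis .
qed

lemma power2_add_abs_diff_le:
  fixes a b w :: real
  assumes "0 \<le> a" "0 \<le> b" "a \<le> w" "b \<le> w"
  shows "(a\<^sup>2 + b\<^sup>2) / 8 + w * \<bar>a - b\<bar> / 2 \<le> w\<^sup>2"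
proof -
  have "a\<^sup>2 \<le> w * a" "b\<^sup>2 \<le> w * b" "w * a \<le> w\<^sup>2" "w * b \<le> w\<^sup>2" "0 \<le> w * a" "0 \<le> w * b"
    using assms by (simp_all add: power2_eq_square mult_right_mono mult_left_mono)
  moreover have "w * \<bar>a - b\<bar> \<le> w * a - w * b \<or> w * \<bar>a - b\<bar> \<le> w * b - w * a"
    by (simp add: abs_if right_diff_distrib)
  ultimately show ?thesis by argo
qed

theorem corollary2p17:
  fixes N :: "('a::{complex_inner, complete_space} \<Rightarrow> 'a) \<Rightarrow> real"
    and T :: "'a \<Rightarrow> 'a"
  assumes norm: "is_norm_on_BH N"
    and algebra_norm: "\<forall>X\<in>bounded_ops. \<forall>Y\<in>bounded_ops. N (X \<circ> Y) \<le> N X * N Y"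
    and selfadjoint_norm: "\<forall>X\<in>bounded_ops. N (adj X) = N X"
    and T: "T \<in> bounded_ops"
  shows "1/16 * N (op_add (adj T \<circ> T) (T \<circ> adj T))
           + 1/2 * wN N T * \<bar>N (ReOp T) - N (ImOp T)\<bar> \<le> (wN N T)\<^sup>2"
proof -
  have "((N (ReOp T))\<^sup>2 + (N (ImOp T))\<^sup>2) / 8 + wN N T * \<bar>N (ReOp T) - N (ImOp T)\<bar> / 2
      \<le> (wN N T)\<^sup>2"
    using norm_on_BH_nonneg[OF norm ReOp_bounded_ops[OF T]]
      norm_on_BH_nonneg[OF norm ImOp_bounded_ops[OF T]]
      N_ReOp_le_wN[OF norm selfadjoint_norm T] N_ImOp_le_wN[OF norm selfadjoint_norm T]
    by (rule power2_add_abs_diff_le)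
  then show ?thesis
    using N_adj_comp_add_comp_adj_le[OF norm algebra_norm T] by linarith
qed

end
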